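(* Let $f:\mathbb{R}^n\to\mathbb{R}$ be differentiable and strongly convex, and let $x^*$ be its unique minimizer. Let $(x^k)$ be the sequence generated by the Method of Ellipcenters (ME) described in the context, started from an arbitrary point. If the method does not stop, then $\lim_{k\to+\infty}x^k=x^*$.
   Context: $\langle\cdot,\cdot\rangle$ and $\|\cdot\|$ denote the Euclidean inner product and norm. A function $f:\mathbb{R}^n\to\mathbb{R}$ is strongly convex with constant $\mu>0$ if $f(tx+(1-t)y)\le tf(x)+(1-t)f(y)-\frac{\mu t(1-t)}{2}\|y-x\|^2$ for all $x,y\in\mathbb{R}^n$, $t\in[0,1]$. Method of Ellipcenters (ME): given an initial point $x^0$, at iteration $k$: (1) if $\nabla f(x^k)=0$, stop. (2) Otherwise let $t_k>0$ be the (unique) positive number with $f(x^k-t_k\nabla f(x^k))=f(x^k)$ and set $y^k=x^k-t_k\nabla f(x^k)$. (3) If $\nabla f(x^k)$ and $\nabla f(y^k)$ are linearly dependent, set $x^{k+1}=\frac12(x^k+y^k)$. Otherwise compute $\cos\theta_k=\frac{\langle x^k-y^k,-\nabla f(y^k)\rangle}{\|x^k-y^k\|\,\|\nabla f(y^k)\|}$, $\sin\theta_k=\sqrt{1-\cos^2\theta_k}$, $w^k=-\nabla f(y^k)+\frac{\langle x^k-y^k,\nabla f(y^k)\rangle}{\|x^k-y^k\|^2}(x^k-y^k)$, $d^k=\frac{w^k}{\|w^k\|}-\frac{\sin\theta_k}{2\cos\theta_k}\frac{x^k-y^k}{\|x^k-y^k\|}$, and let $x^{k+1}$ be a minimizer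 of $f$ over the semiline $\{\frac12(x^k+y^k)+v d^k: v\ge 0\}$ (this semiline is the set of centers of ellipses in the plane $x^k+\mathrm{span}\{\nabla f(x^k),\nabla f(y^k)\}$ passing through $x^k$ and $y^k$ and orthogonal to $\nabla f(x^k)$ at $x^k$ and to $\nabla f(y^k)$ at $y^k$). *)

theory Defs
  imports "HOL-Analysis.Analysis"
begin

definition strongly_convex_on_with :: "real \<Rightarrow> ('a::real_inner \<Rightarrow> real) \<Rightarrow> bool" where
  "strongly_convex_on_with mu f \<longleftrightarrow>
     (\<forall>x y t. 0 \<le> t \<and> t \<le> 1 \<longrightarrow>
        f (t *\<^sub>R x + (1 - t) *\<^sub>R y) \<le> t * f x + (1 - t) * f y - mu * t * (1 - t) / 2 * (norm (y - x))^2)"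

definition strongly_convex :: "('a::real_inner \<Rightarrow> real) \<Rightarrow> bool" where
  "strongly_convex f \<longleftrightarrow> (\<exists>mu>0. strongly_convex_on_with mu f)"

definition lin_dep2 :: "'a::real_vector \<Rightarrow> 'a \<Rightarrow> bool" where
  "lin_dep2 a b \<longleftrightarrow> (\<exists>u v. (u, v) \<noteq> (0, 0) \<and> u *\<^sub>R a + v *\<^sub>R b = 0)"

text \<open>One (non-stopping) iteration of the Method of Ellipcenters: given the current
  iterate xk with nonzero gradient, xk1 is a possible next iterate.
  g is the gradient of f.\<close>
definition me_step :: "('a::euclidean_space \<Rightarrow> real) \<Rightarrow> ('a \<Rightarrow> 'a) \<Rightarrow> 'a \<Rightarrow> 'a \<Rightarrow> bool" where
  "me_step f g xk xk1 \<longleftrightarrow>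
     g xk \<noteq> 0 \<and>
     (\<exists>t>0. f (xk - t *\<^sub>R g xk) = f xk \<and>
        (let y = xk - t *\<^sub>R g xk;
             m = (1/2) *\<^sub>R (xk + y)
         in if lin_dep2 (g xk) (g y) then xk1 = m
            else
              (let c = inner (xk - y) (- g y) / (norm (xk - y) * norm (g y));
                   s = sqrt (1 - c^2);
                   w = - g y + (inner (xk - y) (g y) / (norm (xk - y))^2) *\<^sub>R (xk - y);
                   d = (1 / norm w) *\<^sub>R w - (s / (2 * c)) *\<^sub>R ((1 / norm (xk - y)) *\<^sub>R (xk - y))
               in (\<exists>v\<ge>0. xk1 = m + v *\<^sub>R d) \<and> (\<forall>v\<ge>0. f xk1 \<le> f (m + v *\<^sub>R d)))))"

end

theory Submission
  imports Defs
begin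

(*
  Each ME step does at least as well as the midpoint of the chord [x^k, y^k] of the level set
  (take v = 0 on the semiline), and strong convexity puts f at that midpoint below f(x^k) by
  mu/8 |x^k - y^k|^2.  As f(x^k) decreases and is bounded below, the chords shrink to zero.
  Because f(x^k) = f(y^k), the gradient inequality at y^k makes the gradients at the two ends
  of the chord form an obtuse angle, so |grad f(x^k)| <= |grad f(x^k) - grad f(y^k)|.  The
  gradient of a differentiable convex function is continuous, hence uniformly continuous on
  the bounded sublevel set containing all iterates, and so grad f(x^k) -> 0.  Finally strong
  convexity gives |x^k - x*| <= 4/mu |grad f(x^k)|.
*)

lemma strongly_convex_on_with_imp_convex_on:
  fixes f :: "'a::real_inner \<Rightarrow> real"
  assumes "strongly_convex_on_with mu f" "0 \<le> mu"
  shows "convex_on UNIV f"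
proof
  fix t :: real and a b assume "0 < t" "t < 1"
  then have "f (t *\<^sub>R b + (1 - t) *\<^sub>R a)
      \<le> t * f b + (1 - t) * f a - mu * t * (1 - t) / 2 * (norm (a - b))\<^sup>2"
    using assms(1) unfolding strongly_convex_on_with_def by simp
  moreover have "0 \<le> mu * t * (1 - t) / 2 * (norm (a - b))\<^sup>2"
    using assms(2) \<open>t < 1\<close> \<open>0 < t\<close> by simp
  ultimately show "f ((1 - t) *\<^sub>R a + t *\<^sub>R b) \<le> (1 - t) * f a + t * f b"
    by (simp add: add.commute)
qed simp

lemma strongly_convex_on_with_midpoint:
  fixes f :: "'a::real_inner \<Rightarrow> real"
  assumes "strongly_convex_on_with mu f"
  shows "f ((1/2) *\<^sub>R (a + b)) \<le> (f a + f b) / 2 - mu / 8 * (norm (b - a))\<^sup>2"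
proof -
  have "f ((1/2) *\<^sub>R a + (1 - 1/2) *\<^sub>R b)
      \<le> (1/2) * f a + (1 - 1/2) * f b - mu * (1/2) * (1 - 1/2) / 2 * (norm (b - a))\<^sup>2"
    using assms unfolding strongly_convex_on_with_def
    by (metis field_sum_of_halves le_add_same_cancel1 zero_le_divide_1_iff zero_le_numeral)
  then show ?thesis by (simp add: scaleR_right_distrib add_divide_distrib)
qed

lemma strongly_convex_on_with_quadratic_growth:
  fixes f :: "'a::real_inner \<Rightarrow> real"
  assumes "strongly_convex_on_with mu f" and min: "\<And>z. f xs \<le> f z"
  shows "mu / 4 * (norm (z - xs))\<^sup>2 \<le> f z - f xs"
  using strongly_convex_on_with_midpoint[OF assms(1), of z xs] min[of "(1/2) *\<^sub>R (z + xs)"]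
  by (simp add: norm_minus_commute field_simps)

lemma convex_on_gradient_inequality:
  fixes f :: "'a::real_inner \<Rightarrow> real"
  assumes convex: "convex_on UNIV f" and grad: "(f has_derivative (\<lambda>h. inner gx h)) (at x)"
  shows "f x + inner gx (z - x) \<le> f z"
proof -
  define \<phi> where "\<phi> = (\<lambda>s::real. f (x + s *\<^sub>R (z - x)))"
  have "convex_on UNIV \<phi>"
  proof
    fix t a b :: real assume "0 < t" "t < 1"
    have "x + ((1 - t) *\<^sub>R a + t *\<^sub>R b) *\<^sub>R (z - x)
        = (1 - t) *\<^sub>R (x + a *\<^sub>R (z - x)) + t *\<^sub>R (x + b *\<^sub>R (z - x))"
      by (simp add: algebra_simps)
    then show "\<phi> ((1 - t) *\<^sub>R a + t *\<^sub>R b) \<le> (1 - t) * \<phi> a + t * \<phi> b"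
      using convex_onD[OF convex, of t] \<open>0 < t\<close> \<open>t < 1\<close> by (simp add: \<phi>_def)
  qed simp
  moreover have "(\<phi> has_field_derivative inner gx (z - x)) (at 0)"
  proof -
    have "((\<lambda>s. x + s *\<^sub>R (z - x)) has_derivative (\<lambda>s. s *\<^sub>R (z - x))) (at 0)"
      by (auto intro!: derivative_eq_intros)
    from has_derivative_compose[OF this, of f "inner gx"] grad
    have "(\<phi> has_derivative (\<lambda>s. inner gx (s *\<^sub>R (z - x)))) (at 0)"
      by (simp add: \<phi>_def)
    then show ?thesis
      by (simp add: has_field_derivative_def mult.commute[of _ "inner gx (z - x)"])
  qed
  ultimately have "\<phi> 1 - \<phi> 0 \<ge> inner gx (z - x) * (1 - 0)"
    by (intro convex_on_imp_above_tangent) auto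
  then show ?thesis by (simp add: \<phi>_def)
qed

lemma convex_gradient_continuous:
  fixes f :: "'a::euclidean_space \<Rightarrow> real"
  assumes grad: "\<And>x. (f has_derivative (\<lambda>h. inner (g x) h)) (at x)"
    and above_tangent: "\<And>x y. f x + inner (g x) (y - x) \<le> f y"
  shows "isCont g z"
proof -
  have "eventually (\<lambda>w. dist (g w) (g z) < e) (at z)" if "e > 0" for e
  proof -
    define \<epsilon> where "\<epsilon> = e / (2 * DIM('a))"
    have "\<epsilon> > 0" using \<open>e > 0\<close> by (simp add: \<epsilon>_def)
    then obtain d where "d > 0" and d: "\<And>y. norm (y - z) < d \<Longrightarrow>
        norm (f y - f z - inner (g z) (y - z)) \<le> \<epsilon> * norm (y - z)"
      using grad[of z] unfolding has_derivative_at_alt by blast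
    define r where "r = d / 2"
    have "r > 0" using \<open>d > 0\<close> by (simp add: r_def)
    (* The gradient inequality at w bounds <g w, h> by f (w + h) - f w, which tends to
       f (z + h) - f z = <g z, h> + o(r) as w -> z.  Testing h = +-r b for b in Basis then
       bounds every coordinate of g w - g z. *)
    have directional: "eventually (\<lambda>w. inner (g w - g z) h < 2 * \<epsilon> * r) (at z)"
      if "norm h = r" for h
    proof -
      have "\<bar>f (z + h) - f z - inner (g z) h\<bar> \<le> \<epsilon> * r"
        using d[of "z + h"] \<open>norm h = r\<close> \<open>d > 0\<close> by (simp add: r_def)
      then have remainder: "f (z + h) - f z - inner (g z) h \<le> \<epsilon> * r"
        by (rule abs_le_D1)
      have "isCont (\<lambda>w. f (w + h) - f w) z"
        by (intro continuous_intros isCont_o2[OF _ has_derivative_continuous[OF grad]])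
      then have "eventually (\<lambda>w. f (w + h) - f w < f (z + h) - f z + \<epsilon> * r) (at z)"
        using \<open>\<epsilon> > 0\<close> \<open>r > 0\<close> unfolding isCont_def by (intro order_tendstoD) auto
      then show ?thesis
      proof (rule eventually_mono)
        fix w assume "f (w + h) - f w < f (z + h) - f z + \<epsilon> * r"
        with above_tangent[of w "w + h"] remainder show "inner (g w - g z) h < 2 * \<epsilon> * r"
          by (simp add: inner_diff_left)
      qed
    qed
    have "eventually (\<lambda>w. \<forall>b\<in>Basis. inner (g w - g z) (r *\<^sub>R b) < 2 * \<epsilon> * r
        \<and> inner (g w - g z) (- (r *\<^sub>R b)) < 2 * \<epsilon> * r) (at z)"
      using \<open>r > 0\<close> by (intro eventually_ball_finite ballI eventually_conj directional) auto
    then show ?thesis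
    proof eventually_elim
      case (elim w)
      have "\<bar>inner (g w - g z) b\<bar> < 2 * \<epsilon>" if "b \<in> Basis" for b
      proof -
        have "\<bar>inner (g w - g z) (r *\<^sub>R b)\<bar> < 2 * \<epsilon> * r"
          using elim that unfolding abs_less_iff inner_minus_right by blast
        then show ?thesis using \<open>r > 0\<close> by (simp add: abs_mult)
      qed
      then have "(\<Sum>b\<in>Basis. \<bar>inner (g w - g z) b\<bar>) < (\<Sum>b::'a\<in>Basis. 2 * \<epsilon>)"
        by (intro sum_strict_mono) auto
      with norm_le_l1[of "g w - g z"] show ?case
        by (simp add: dist_norm \<epsilon>_def)
    qed
  qed
  then show ?thesis unfolding isCont_def tendsto_iff by blast
qed

lemma norm_le_norm_diff_if_inner_nonpos:
  fixes a b :: "'a::real_inner"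
  assumes "inner a b \<le> 0"
  shows "norm a \<le> norm (a - b)"
proof (rule power2_le_imp_le)
  have "(norm (a - b))\<^sup>2 = (norm a)\<^sup>2 - 2 * inner a b + (norm b)\<^sup>2"
    using dot_norm_neg[of a b] by (simp add: field_simps)
  then show "(norm a)\<^sup>2 \<le> (norm (a - b))\<^sup>2"
    using assms zero_le_power2[of "norm b"] by linarith
qed simp

lemma sufficient_descent_decseq:
  fixes F a :: "nat \<Rightarrow> real"
  assumes "\<And>k. F (Suc k) + c * a k \<le> F k" "\<And>k. 0 \<le> a k" "0 \<le> c"
  shows "decseq F"
proof (rule decseq_SucI)
  fix k
  show "F (Suc k) \<le> F k"
    using assms(1)[of k] mult_nonneg_nonneg[OF assms(3) assms(2)[of k]] by linarith
qed

lemma sufficient_descent_tendsto_zero: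
  fixes F a :: "nat \<Rightarrow> real"
  assumes descent: "\<And>k. F (Suc k) + c * a k \<le> F k"
    and nonneg: "\<And>k. 0 \<le> a k" and bounded: "\<And>k. m \<le> F k" and "c > 0"
  shows "a \<longlonglongrightarrow> 0"
proof (rule Lim_null_comparison)
  have "decseq F"
    using descent nonneg \<open>c > 0\<close> by (intro sufficient_descent_decseq) auto
  then obtain L where "F \<longlonglongrightarrow> L"
    using decseq_convergent bounded by metis
  then have "(\<lambda>k. F k - F (Suc k)) \<longlonglongrightarrow> L - L"
    using tendsto_diff LIMSEQ_Suc by metis
  then show "(\<lambda>k. (F k - F (Suc k)) / c) \<longlonglongrightarrow> 0"
    using tendsto_divide_zero by simp
  have "norm (a k) \<le> (F k - F (Suc k)) / c" for k
    using descent[of k] nonneg[of k] \<open>c > 0\<close> by (simp add: pos_le_divide_eq mult.commute)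
  then show "\<forall>\<^sub>F k in sequentially. norm (a k) \<le> (F k - F (Suc k)) / c"
    by simp
qed

lemma strongly_convex_on_with_sublevel_subset_cball:
  fixes f :: "'a::real_inner \<Rightarrow> real"
  assumes "strongly_convex_on_with mu f" "mu > 0" "\<And>z. f xs \<le> f z"
  shows "{z. f z \<le> c} \<subseteq> cball xs (sqrt (4 / mu * (c - f xs)))"
proof
  fix z assume "z \<in> {z. f z \<le> c}"
  with strongly_convex_on_with_quadratic_growth[OF assms(1,3), of z] \<open>mu > 0\<close>
  have "(norm (z - xs))\<^sup>2 \<le> 4 / mu * (c - f xs)"
    by (simp add: field_simps)
  then show "z \<in> cball xs (sqrt (4 / mu * (c - f xs)))"
    by (simp add: dist_norm norm_minus_commute real_le_rsqrt)
qed

lemma strongly_convex_on_with_dist_minimizer_le: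
  fixes f :: "'a::real_inner \<Rightarrow> real"
  assumes "strongly_convex_on_with mu f" "mu > 0" "\<And>z. f xs \<le> f z"
    and tangent: "f z + inner gz (xs - z) \<le> f xs"
  shows "norm (z - xs) \<le> 4 / mu * norm gz"
proof -
  have "mu / 4 * (norm (z - xs))\<^sup>2 \<le> inner gz (z - xs)"
    using strongly_convex_on_with_quadratic_growth[OF assms(1,3), of z] tangent
    by (simp add: inner_diff_right)
  also have "\<dots> \<le> norm gz * norm (z - xs)"
    by (rule norm_cauchy_schwarz)
  finally have "norm (z - xs) * (mu / 4 * norm (z - xs)) \<le> norm (z - xs) * norm gz"
    by (simp add: power2_eq_square algebra_simps)
  then have "mu / 4 * norm (z - xs) \<le> norm gz \<or> norm (z - xs) = 0"
    by (auto simp: mult_le_cancel_left)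
  then show ?thesis using \<open>mu > 0\<close> by (auto simp: field_simps)
qed

lemma gradient_tendsto_zero_if_level_chords_vanish:
  fixes f :: "'a::euclidean_space \<Rightarrow> real"
  assumes grad: "\<And>x. (f has_derivative (\<lambda>h. inner (g x) h)) (at x)"
    and above_tangent: "\<And>x y. f x + inner (g x) (y - x) \<le> f y"
    and chord: "\<And>k. y k = x k - t k *\<^sub>R g (x k)" "\<And>k. t k > 0" "\<And>k. f (y k) = f (x k)"
    and "compact K" "\<And>k. x k \<in> K" "\<And>k. y k \<in> K"
    and "(\<lambda>k. dist (x k) (y k)) \<longlonglongrightarrow> 0"
  shows "(\<lambda>k. g (x k)) \<longlonglongrightarrow> 0"
proof (rule Lim_null_comparison)
  have "uniformly_continuous_on K g"
    using convex_gradient_continuous[OF grad above_tangent] \<open>compact K\<close>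
    by (intro compact_uniformly_continuous continuous_at_imp_continuous_on) auto
  with assms(7-9) show "(\<lambda>k. dist (g (x k)) (g (y k))) \<longlonglongrightarrow> 0"
    unfolding uniformly_continuous_on_sequentially by blast
  have "norm (g (x k)) \<le> dist (g (x k)) (g (y k))" for k
  proof -
    have "t k * inner (g (y k)) (g (x k)) \<le> 0"
      using above_tangent[of "y k" "x k"] chord[of k] by simp
    then have "inner (g (x k)) (g (y k)) \<le> 0"
      using \<open>t k > 0\<close> by (simp add: mult_le_0_iff inner_commute)
    then show ?thesis
      unfolding dist_norm by (rule norm_le_norm_diff_if_inner_nonpos)
  qed
  then show "\<forall>\<^sub>F k in sequentially. norm (g (x k)) \<le> dist (g (x k)) (g (y k))"
    by simp
qed

lemma me_step_le_midpoint:
  assumes "me_step f g a b"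
  obtains t where "t > 0" "f (a - t *\<^sub>R g a) = f a"
    "f b \<le> f ((1/2) *\<^sub>R (a + (a - t *\<^sub>R g a)))"
  using assms unfolding me_step_def Let_def
  by (metis (no_types, lifting) order.refl add.right_neutral scale_zero_left)

lemma me_step_sufficient_decrease:
  assumes "strongly_convex_on_with mu f" "me_step f g a b"
  shows "\<exists>t>0. f (a - t *\<^sub>R g a) = f a \<and> f b + mu / 8 * (norm (t *\<^sub>R g a))\<^sup>2 \<le> f a"
proof -
  obtain t where "t > 0" and level: "f (a - t *\<^sub>R g a) = f a"
    and "f b \<le> f ((1/2) *\<^sub>R (a + (a - t *\<^sub>R g a)))"
    using me_step_le_midpoint[OF assms(2)] .
  with strongly_convex_on_with_midpoint[OF assms(1), of a "a - t *\<^sub>R g a"]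
  show ?thesis by auto
qed

theorem theorem1:
  fixes f :: "'a::euclidean_space \<Rightarrow> real"
    and g :: "'a \<Rightarrow> 'a"
    and x :: "nat \<Rightarrow> 'a"
    and xstar :: 'a
  assumes grad: "\<And>z. (f has_derivative (\<lambda>h. inner (g z) h)) (at z)"
    and sc: "strongly_convex f"
    and xstar_min: "\<And>z. f xstar \<le> f z"
    and iter: "\<And>k. me_step f g (x k) (x (Suc k))"
  shows "x \<longlonglongrightarrow> xstar"
proof -
  obtain mu where "mu > 0" and scw: "strongly_convex_on_with mu f"
    using sc unfolding strongly_convex_def by blast
  have tangent: "\<And>a b. f a + inner (g a) (b - a) \<le> f b"
    using strongly_convex_on_with_imp_convex_on[OF scw] \<open>mu > 0\<close> grad
    by (simp add: convex_on_gradient_inequality)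
  obtain t where t: "\<And>k. t k > 0" "\<And>k. f (x k - t k *\<^sub>R g (x k)) = f (x k)"
    "\<And>k. f (x (Suc k)) + mu / 8 * (norm (t k *\<^sub>R g (x k)))\<^sup>2 \<le> f (x k)"
    using me_step_sufficient_decrease[OF scw iter] by metis
  define y where "y k = x k - t k *\<^sub>R g (x k)" for k
  let ?K = "cball xstar (sqrt (4 / mu * (f (x 0) - f xstar)))"
  have "(\<lambda>k. (norm (t k *\<^sub>R g (x k)))\<^sup>2) \<longlonglongrightarrow> 0"
    using \<open>mu > 0\<close>
    by (intro sufficient_descent_tendsto_zero[where F = "\<lambda>k. f (x k)", OF t(3) _ xstar_min]) auto
  then have chords: "(\<lambda>k. dist (x k) (y k)) \<longlonglongrightarrow> 0"
    using tendsto_real_sqrt[of "\<lambda>k. (norm (t k *\<^sub>R g (x k)))\<^sup>2" 0 sequentially]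
    by (simp add: y_def dist_norm)
  have "decseq (\<lambda>k. f (x k))"
    using \<open>mu > 0\<close> by (intro sufficient_descent_decseq[where F = "\<lambda>k. f (x k)", OF t(3)]) auto
  then have "f (x k) \<le> f (x 0)" "f (y k) \<le> f (x 0)" for k
    using t(2) by (simp_all add: decseq_def y_def)
  then have in_K: "x k \<in> ?K" "y k \<in> ?K" for k
    using strongly_convex_on_with_sublevel_subset_cball[OF scw \<open>mu > 0\<close> xstar_min] by blast+
  have "(\<lambda>k. g (x k)) \<longlonglongrightarrow> 0"
    using gradient_tendsto_zero_if_level_chords_vanish[OF grad tangent y_def t(1) _
        compact_cball in_K chords] t(2)
    by (simp add: y_def)
  then have "(\<lambda>k. 4 / mu * norm (g (x k))) \<longlonglongrightarrow> 0"
    by (intro tendsto_mult_right_zero tendsto_norm_zero)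
  moreover have "eventually (\<lambda>k. norm (x k - xstar) \<le> 4 / mu * norm (g (x k))) sequentially"
    using strongly_convex_on_with_dist_minimizer_le[OF scw \<open>mu > 0\<close> xstar_min tangent] by simp
  ultimately have "(\<lambda>k. x k - xstar) \<longlonglongrightarrow> 0"
    by (rule Lim_null_comparison[rotated])
  then show ?thesis
    by (simp add: Lim_null[symmetric])
qed

end
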